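(* Under the hypotheses of Lemma 2.2, let $\varphi(U)=\phi(U)-\phi(I)U+[T,U]$ with $T=P_1\phi(P_1)P_2+P_2\phi(P_2)P_1$. Then for all $U_{ij}\in\mathcal{U}_{ij}$ ($i,j=1,2$): (1) $\varphi(U_{11})\in\mathcal{U}_{11}$; (2) $\varphi(U_{22})\in\mathcal{U}_{22}$; (3) $P_1\varphi(U_{12})P_1=P_2\varphi(U_{12})P_2=0$; (4) $P_1\varphi(U_{21})P_1=P_2\varphi(U_{21})P_2=0$.
   Context: $\mathcal{U}=\begin{pmatrix}\mathcal{A}&\mathcal{M}\\ \mathcal{N}&\mathcal{B}\end{pmatrix}$ is a generalized matrix ring: $\mathcal{A},\mathcal{B}$ unital 2-torsion free rings, $\mathcal{M}$ a unital $(\mathcal{A},\mathcal{B})$-bimodule faithful on both sides, $\mathcal{N}$ a unital $(\mathcal{B},\mathcal{A})$-bimodule, with bimodule pairings $MN\in\mathcal{A}$, $NM\in\mathcal{B}$ satisfying $(MN)M'=M(NM')$, $(NM)N'=N(MN')$; $\mathcal{U}$ consists of $2\times2$ matrices with usual matrix operations and identity $I$. The hypotheses of Lemma 2.2: $\phi:\mathcal{U}\to\mathcal{U}$ is additive and $\phi(U)\circ V+U\circ\phi(V)=0$ whenever $UV=VU=0$. $X\circ Y=XY+YX$, $[X,Y]=XY-YX$. $P_1=\mathrm{diag}(I_{\mathcal{A}},0)$, $P_2=\mathrm{diag}(0,I_{\mathcal{B}})$, and $\mathcal{U}_{ij}=P_i\mathcal{U}P_j$. *)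

theory Defs
  imports Main
begin

text \<open>Generalized matrix ring U = (A M; N B).  Elements are quadruples.\<close>

datatype ('a,'m,'n,'b) gm = GM (g11: 'a) (g12: 'm) (g21: 'n) (g22: 'b)

instantiation gm :: (ab_group_add, ab_group_add, ab_group_add, ab_group_add) ab_group_add
begin
definition "0 = GM 0 0 0 0"
definition "X + Y = GM (g11 X + g11 Y) (g12 X + g12 Y) (g21 X + g21 Y) (g22 X + g22 Y)"
definition "- X = GM (- g11 X) (- g12 X) (- g21 X) (- g22 X)"
definition "X - Y = GM (g11 X - g11 Y) (g12 X - g12 Y) (g21 X - g21 Y) (g22 X - g22 Y)"
instance
  by standard (auto simp: zero_gm_def plus_gm_def uminus_gm_def minus_gm_def
                          algebra_simps intro: gm.expand)
end

record ('a,'m,'n,'b) gmops =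
  actAM :: "'a \<Rightarrow> 'm \<Rightarrow> 'm"
  actMB :: "'m \<Rightarrow> 'b \<Rightarrow> 'm"
  actBN :: "'b \<Rightarrow> 'n \<Rightarrow> 'n"
  actNA :: "'n \<Rightarrow> 'a \<Rightarrow> 'n"
  pairMN :: "'m \<Rightarrow> 'n \<Rightarrow> 'a"
  pairNM :: "'n \<Rightarrow> 'm \<Rightarrow> 'b"

definition two_torsion_free :: "'r::ab_group_add itself \<Rightarrow> bool" where
  "two_torsion_free _ \<longleftrightarrow> (\<forall>x::'r. x + x = 0 \<longrightarrow> x = 0)"

definition gen_matrix_ring :: "('a::ring_1,'m::ab_group_add,'n::ab_group_add,'b::ring_1) gmops \<Rightarrow> bool" where
  "gen_matrix_ring R \<longleftrightarrow>
    two_torsion_free TYPE('a) \<and> two_torsion_free TYPE('b) \<and>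
    \<comment> \<open>M is a unital (A,B)-bimodule\<close>
    (\<forall>a a' m. actAM R (a + a') m = actAM R a m + actAM R a' m) \<and>
    (\<forall>a m m'. actAM R a (m + m') = actAM R a m + actAM R a m') \<and>
    (\<forall>a a' m. actAM R (a * a') m = actAM R a (actAM R a' m)) \<and>
    (\<forall>m. actAM R 1 m = m) \<and>
    (\<forall>m b b'. actMB R m (b + b') = actMB R m b + actMB R m b') \<and>
    (\<forall>m m' b. actMB R (m + m') b = actMB R m b + actMB R m' b) \<and>
    (\<forall>m b b'. actMB R m (b * b') = actMB R (actMB R m b) b') \<and>
    (\<forall>m. actMB R m 1 = m) \<and>
    (\<forall>a m b. actMB R (actAM R a m) b = actAM R a (actMB R m b)) \<and>
    \<comment> \<open>N is a unital (B,A)-bimodule\<close>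
    (\<forall>b b' n. actBN R (b + b') n = actBN R b n + actBN R b' n) \<and>
    (\<forall>b n n'. actBN R b (n + n') = actBN R b n + actBN R b n') \<and>
    (\<forall>b b' n. actBN R (b * b') n = actBN R b (actBN R b' n)) \<and>
    (\<forall>n. actBN R 1 n = n) \<and>
    (\<forall>n a a'. actNA R n (a + a') = actNA R n a + actNA R n a') \<and>
    (\<forall>n n' a. actNA R (n + n') a = actNA R n a + actNA R n' a) \<and>
    (\<forall>n a a'. actNA R n (a * a') = actNA R (actNA R n a) a') \<and>
    (\<forall>n. actNA R n 1 = n) \<and>
    (\<forall>b n a. actNA R (actBN R b n) a = actBN R b (actNA R n a)) \<and>
    \<comment> \<open>M faithful as left A-module and as right B-module\<close>
    (\<forall>a. (\<forall>m. actAM R a m = 0) \<longrightarrow> a = 0) \<and>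
    (\<forall>b. (\<forall>m. actMB R m b = 0) \<longrightarrow> b = 0) \<and>
    \<comment> \<open>pairing M x N -> A is an (A,A)-bimodule map, B-balanced\<close>
    (\<forall>m m' n. pairMN R (m + m') n = pairMN R m n + pairMN R m' n) \<and>
    (\<forall>m n n'. pairMN R m (n + n') = pairMN R m n + pairMN R m n') \<and>
    (\<forall>a m n. pairMN R (actAM R a m) n = a * pairMN R m n) \<and>
    (\<forall>m n a. pairMN R m (actNA R n a) = pairMN R m n * a) \<and>
    (\<forall>m b n. pairMN R (actMB R m b) n = pairMN R m (actBN R b n)) \<and>
    \<comment> \<open>pairing N x M -> B is a (B,B)-bimodule map, A-balanced\<close>
    (\<forall>n n' m. pairNM R (n + n') m = pairNM R n m + pairNM R n' m) \<and>
    (\<forall>n m m'. pairNM R n (m + m') = pairNM R n m + pairNM R n m') \<and>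
    (\<forall>b n m. pairNM R (actBN R b n) m = b * pairNM R n m) \<and>
    (\<forall>n m b. pairNM R n (actMB R m b) = pairNM R n m * b) \<and>
    (\<forall>n a m. pairNM R (actNA R n a) m = pairNM R n (actAM R a m)) \<and>
    \<comment> \<open>(MN)M' = M(NM'), (NM)N' = N(MN')\<close>
    (\<forall>m n m'. actAM R (pairMN R m n) m' = actMB R m (pairNM R n m')) \<and>
    (\<forall>n m n'. actBN R (pairNM R n m) n' = actNA R n (pairMN R m n'))"

definition gmul :: "('a::ring_1,'m::ab_group_add,'n::ab_group_add,'b::ring_1) gmops \<Rightarrow>
    ('a,'m,'n,'b) gm \<Rightarrow> ('a,'m,'n,'b) gm \<Rightarrow> ('a,'m,'n,'b) gm" where
  "gmul R X Y = GM
     (g11 X * g11 Y + pairMN R (g12 X) (g21 Y))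
     (actAM R (g11 X) (g12 Y) + actMB R (g12 X) (g22 Y))
     (actBN R (g22 X) (g21 Y) + actNA R (g21 X) (g11 Y))
     (pairNM R (g21 X) (g12 Y) + g22 X * g22 Y)"

definition gI :: "('a::ring_1,'m::ab_group_add,'n::ab_group_add,'b::ring_1) gm" where
  "gI = GM 1 0 0 1"

definition gP1 :: "('a::ring_1,'m::ab_group_add,'n::ab_group_add,'b::ring_1) gm" where
  "gP1 = GM 1 0 0 0"

definition gP2 :: "('a::ring_1,'m::ab_group_add,'n::ab_group_add,'b::ring_1) gm" where
  "gP2 = GM 0 0 0 1"

definition jordan where "jordan R X Y = gmul R X Y + gmul R Y X"
definition lie where "lie R X Y = gmul R X Y - gmul R Y X"

definition corner where "corner R P Q = {gmul R (gmul R P X) Q | X. True}"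

end

theory Submission
  imports Defs "HOL.Modules"
begin

text \<open>Since \<open>P\<^sub>1P\<^sub>2 = P\<^sub>2P\<^sub>1 = 0\<close>, the hypothesis applied to \<open>P\<^sub>1, P\<^sub>2\<close> and halved by
  2-torsion-freeness forces \<open>\<phi>(P\<^sub>1) = (a, m; n, 0)\<close> and \<open>\<phi>(P\<^sub>2) = (0, -m; -n, b)\<close>, so
  \<open>\<phi>(I) = diag(a, b)\<close> and \<open>T = (0, m; -n, 0)\<close>.  A diagonal element \<open>U\<^sub>1\<^sub>1\<close> (resp. \<open>U\<^sub>2\<^sub>2\<close>)
  annihilates \<open>P\<^sub>2\<close> (resp. \<open>P\<^sub>1\<close>), and the hypothesis for that pair determines every entry of
  \<open>\<phi>(U)\<close> outside the corner of \<open>U\<close>; these entries are exactly cancelled by \<open>-\<phi>(I)U + [T, U]\<close>.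
  An off-diagonal \<open>U\<^sub>1\<^sub>2\<close> squares to zero and \<open>P\<^sub>1 + U\<^sub>1\<^sub>2\<close>, \<open>P\<^sub>2 - U\<^sub>1\<^sub>2\<close> annihilate each other;
  comparing the hypothesis for this pair with those for \<open>(P\<^sub>1, P\<^sub>2)\<close> and \<open>(U\<^sub>1\<^sub>2, U\<^sub>1\<^sub>2)\<close> gives the
  diagonal entries of \<open>\<phi>(U\<^sub>1\<^sub>2)\<close>, which again cancel against \<open>[T, U\<^sub>1\<^sub>2]\<close>; \<open>U\<^sub>2\<^sub>1\<close> is symmetric.\<close>

lemma GM_add [simp]: "GM a m n b + GM a' m' n' b' = GM (a + a') (m + m') (n + n') (b + b')"
  by (simp add: plus_gm_def)

lemma GM_diff [simp]: "GM a m n b - GM a' m' n' b' = GM (a - a') (m - m') (n - n') (b - b')"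
  by (simp add: minus_gm_def)

lemma GM_uminus [simp]: "- GM a m n b = GM (- a) (- m) (- n) (- b)"
  by (simp add: uminus_gm_def)

lemma GM_eq_0_iff [simp]: "GM a m n b = 0 \<longleftrightarrow> a = 0 \<and> m = 0 \<and> n = 0 \<and> b = 0"
  by (simp add: zero_gm_def)

lemma gmul_GM [simp]:
  "gmul R (GM a m n b) (GM a' m' n' b') = GM
     (a * a' + pairMN R m n')
     (actAM R a m' + actMB R m b')
     (actBN R b n' + actNA R n a')
     (pairNM R n m' + b * b')"
  by (simp add: gmul_def)

locale generalized_matrix_ring =
  fixes R :: "('a::ring_1,'m::ab_group_add,'n::ab_group_add,'b::ring_1) gmops"
  assumes gen_matrix_ring: "gen_matrix_ring R"
begin

lemma two_torsion_free_A: "(x::'a) + x = 0 \<Longrightarrow> x = 0"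
  using gen_matrix_ring unfolding gen_matrix_ring_def two_torsion_free_def by (elim conjE) blast

lemma two_torsion_free_B: "(y::'b) + y = 0 \<Longrightarrow> y = 0"
  using gen_matrix_ring unfolding gen_matrix_ring_def two_torsion_free_def by (elim conjE) blast

lemma gmops_additive:
  shows "additive (actAM R a)" and "additive (\<lambda>a. actAM R a m)"
    and "additive (actMB R m)" and "additive (\<lambda>m. actMB R m b)"
    and "additive (actBN R b)" and "additive (\<lambda>b. actBN R b n)"
    and "additive (actNA R n)" and "additive (\<lambda>n. actNA R n a)"
    and "additive (pairMN R m)" and "additive (\<lambda>m. pairMN R m n)"
    and "additive (pairNM R n)" and "additive (\<lambda>n. pairNM R n m)"
  using gen_matrix_ring unfolding gen_matrix_ring_def
  by (elim conjE; simp (no_asm_simp) add: additive_def)+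

lemmas gmops_add [simp] = gmops_additive[THEN additive.add]
lemmas gmops_zero [simp] = gmops_additive[THEN additive.zero]
lemmas gmops_minus [simp] = gmops_additive[THEN additive.minus]

lemma gmops_one [simp]: "actAM R 1 m = m" "actMB R m 1 = m" "actBN R 1 n = n" "actNA R n 1 = n"
  using gen_matrix_ring unfolding gen_matrix_ring_def by (elim conjE; simp (no_asm_simp))+

lemma gmul_additive: "additive (\<lambda>X. gmul R X Z)" "additive (gmul R Z)"
  by (unfold_locales; cases Z; simp add: gmul_def plus_gm_def distrib_left distrib_right)+

lemma jordan_additive: "additive (\<lambda>X. jordan R X Z)" "additive (jordan R Z)"
  by (unfold_locales; simp add: jordan_def gmul_additive[THEN additive.add] ac_simps)+

lemmas gmul_add = gmul_additive[THEN additive.add]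
lemmas gmul_diff = gmul_additive[THEN additive.diff]
lemmas jordan_add = jordan_additive[THEN additive.add]
lemmas jordan_diff = jordan_additive[THEN additive.diff]

lemma compress_P1_P1: "gmul R (gmul R gP1 X) gP1 = GM (g11 X) 0 0 0"
  and compress_P2_P2: "gmul R (gmul R gP2 X) gP2 = GM 0 0 0 (g22 X)"
  and compress_P1_P2: "gmul R (gmul R gP1 X) gP2 = GM 0 (g12 X) 0 0"
  and compress_P2_P1: "gmul R (gmul R gP2 X) gP1 = GM 0 0 (g21 X) 0"
  by (cases X; simp add: gP1_def gP2_def)+

lemma corner_P1_P1: "corner R gP1 gP1 = range (\<lambda>a. GM a 0 0 0)"
  and corner_P2_P2: "corner R gP2 gP2 = range (\<lambda>b. GM 0 0 0 b)"
  and corner_P1_P2: "corner R gP1 gP2 = range (\<lambda>m. GM 0 m 0 0)"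
  and corner_P2_P1: "corner R gP2 gP1 = range (\<lambda>n. GM 0 0 n 0)"
  unfolding corner_def compress_P1_P1 compress_P2_P2 compress_P1_P2 compress_P2_P1
  by (auto simp: image_def; metis gm.sel)+

end

locale jordan_zero_product_map = generalized_matrix_ring +
  fixes phi :: "('a::ring_1,'m::ab_group_add,'n::ab_group_add,'b::ring_1) gm \<Rightarrow> ('a,'m,'n,'b) gm"
  assumes phi_add: "phi (X + Y) = phi X + phi Y"
    and jordan_zero_product:
      "gmul R U V = 0 \<Longrightarrow> gmul R V U = 0 \<Longrightarrow> jordan R (phi U) V + jordan R U (phi V) = 0"
begin

sublocale phi: additive phi
  by unfold_locales (rule phi_add)

lemma jordan_zero_product_linearized:
  assumes "gmul R A B = 0" "gmul R B A = 0" "gmul R U U = 0"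
    and "gmul R A U = gmul R U B" "gmul R B U = gmul R U A"
  shows "jordan R (phi U) B + jordan R U (phi B) = jordan R (phi A) U + jordan R A (phi U)"
proof -
  have "gmul R (A + U) (B - U) = 0" "gmul R (B - U) (A + U) = 0"
    using assms by (simp_all add: gmul_add gmul_diff)
  then have "jordan R (phi (A + U)) (B - U) + jordan R (A + U) (phi (B - U)) = 0"
    by (rule jordan_zero_product)
  moreover have "jordan R (phi A) B + jordan R A (phi B) = 0"
    using assms(1,2) by (rule jordan_zero_product)
  moreover have "jordan R (phi U) U + jordan R U (phi U) = 0"
    using assms(3,3) by (rule jordan_zero_product)
  moreover have "jordan R (phi (A + U)) (B - U) + jordan R (A + U) (phi (B - U))
    = (jordan R (phi A) B + jordan R A (phi B)) - (jordan R (phi U) U + jordan R U (phi U))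
      + (jordan R (phi U) B + jordan R U (phi B)) - (jordan R (phi A) U + jordan R A (phi U))"
    by (simp add: phi.add phi.diff jordan_add jordan_diff algebra_simps)
  ultimately show ?thesis by simp
qed

lemma phi_P1_P2:
  obtains a m n b where "phi gP1 = GM a m n 0" and "phi gP2 = GM 0 (- m) (- n) b"
proof -
  obtain a m n b' where p1: "phi gP1 = GM a m n b'" by (cases "phi gP1")
  obtain a' m' n' b where p2: "phi gP2 = GM a' m' n' b" by (cases "phi gP2")
  have "jordan R (phi gP1) gP2 + jordan R gP1 (phi gP2) = 0"
    by (rule jordan_zero_product) (simp_all add: gP1_def gP2_def)
  then have "a' + a' = 0" "m + m' = 0" "n + n' = 0" "b' + b' = 0"
    unfolding jordan_def p1 p2 by (simp_all add: gP1_def gP2_def)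
  then have "a' = 0" "m' = - m" "n' = - n" "b' = 0"
    by (simp_all add: two_torsion_free_A two_torsion_free_B add_eq_0_iff)
  then show thesis using that p1 p2 by simp
qed

lemma phi_I:
  assumes "phi gP1 = GM a m n 0" and "phi gP2 = GM 0 (- m) (- n) b"
  shows "phi gI = GM a 0 0 b"
proof -
  have "phi gI = phi (gP1 + gP2)" by (simp add: gI_def gP1_def gP2_def)
  then show ?thesis using assms by (simp add: phi.add)
qed

definition T where
  "T = gmul R (gmul R gP1 (phi gP1)) gP2 + gmul R (gmul R gP2 (phi gP2)) gP1"

definition varphi where
  "varphi U = phi U - gmul R (phi gI) U + lie R T U"

lemma varphi_eq:
  assumes "phi gP1 = GM a m n 0" and "phi gP2 = GM 0 (- m) (- n) b"
  shows "varphi U = phi U - gmul R (GM a 0 0 b) U + lie R (GM 0 m (- n) 0) U"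
  unfolding varphi_def T_def phi_I[OF assms] compress_P1_P2 compress_P2_P1
  using assms by simp

lemma phi_corner_P1_P1:
  assumes "phi gP2 = GM 0 (- m) (- n) b"
  obtains p where "phi (GM x 0 0 0) = GM p (actAM R x m) (actNA R n x) 0"
proof -
  obtain p q r s where pU: "phi (GM x 0 0 0) = GM p q r s" by (cases "phi (GM x 0 0 0)")
  have "jordan R (phi (GM x 0 0 0)) gP2 + jordan R (GM x 0 0 0) (phi gP2) = 0"
    by (rule jordan_zero_product) (simp_all add: gP2_def)
  then have qr: "q = actAM R x m" "r = actNA R n x" and ss: "s + s = 0"
    unfolding jordan_def pU assms by (simp_all add: gP2_def)
  show thesis using that pU qr two_torsion_free_B[OF ss] by simp
qed

lemma phi_corner_P2_P2:
  assumes "phi gP1 = GM a m n 0"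
  obtains p where "phi (GM 0 0 0 y) = GM 0 (- actMB R m y) (- actBN R y n) p"
proof -
  obtain p q r s where pU: "phi (GM 0 0 0 y) = GM p q r s" by (cases "phi (GM 0 0 0 y)")
  have "jordan R (phi (GM 0 0 0 y)) gP1 + jordan R (GM 0 0 0 y) (phi gP1) = 0"
    by (rule jordan_zero_product) (simp_all add: gP1_def)
  then have qr: "q = - actMB R m y" "r = - actBN R y n" and ss: "p + p = 0"
    unfolding jordan_def pU assms by (simp_all add: gP1_def add_eq_0_iff2)
  show thesis using that pU qr two_torsion_free_A[OF ss] by simp
qed

lemma phi_corner_P1_P2:
  assumes "phi gP1 = GM a m n 0" and "phi gP2 = GM 0 (- m) (- n) b"
  obtains q r where "phi (GM 0 u 0 0) = GM (- pairMN R u n) q r (pairNM R n u)"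
proof -
  obtain p q r s where pU: "phi (GM 0 u 0 0) = GM p q r s" by (cases "phi (GM 0 u 0 0)")
  have "jordan R (phi (GM 0 u 0 0)) gP2 + jordan R (GM 0 u 0 0) (phi gP2)
      = jordan R (phi gP1) (GM 0 u 0 0) + jordan R gP1 (phi (GM 0 u 0 0))"
    by (rule jordan_zero_product_linearized) (simp_all add: gP1_def gP2_def)
  then have p: "(p + pairMN R u n) + (p + pairMN R u n) = 0"
    and s: "(s - pairNM R n u) + (s - pairNM R n u) = 0"
    unfolding jordan_def pU assms by (simp_all add: gP1_def gP2_def algebra_simps neg_eq_iff_add_eq_0 eq_neg_iff_add_eq_0)
  show thesis
    using that pU two_torsion_free_A[OF p] two_torsion_free_B[OF s] by (simp add: add_eq_0_iff2)
qed

lemma phi_corner_P2_P1: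
  assumes "phi gP1 = GM a m n 0" and "phi gP2 = GM 0 (- m) (- n) b"
  obtains q r where "phi (GM 0 0 v 0) = GM (- pairMN R m v) q r (pairNM R v m)"
proof -
  obtain p q r s where pU: "phi (GM 0 0 v 0) = GM p q r s" by (cases "phi (GM 0 0 v 0)")
  have "jordan R (phi (GM 0 0 v 0)) gP1 + jordan R (GM 0 0 v 0) (phi gP1)
      = jordan R (phi gP2) (GM 0 0 v 0) + jordan R gP2 (phi (GM 0 0 v 0))"
    by (rule jordan_zero_product_linearized) (simp_all add: gP1_def gP2_def)
  then have p: "(p + pairMN R m v) + (p + pairMN R m v) = 0"
    and s: "(s - pairNM R v m) + (s - pairNM R v m) = 0"
    unfolding jordan_def pU assms by (simp_all add: gP1_def gP2_def algebra_simps neg_eq_iff_add_eq_0 eq_neg_iff_add_eq_0)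
  show thesis
    using that pU two_torsion_free_A[OF p] two_torsion_free_B[OF s] by (simp add: add_eq_0_iff2)
qed

lemma varphi_corner_P1_P1:
  assumes "U \<in> corner R gP1 gP1"
  shows "varphi U \<in> corner R gP1 gP1"
proof -
  obtain a m n b where p1: "phi gP1 = GM a m n 0" and p2: "phi gP2 = GM 0 (- m) (- n) b"
    by (rule phi_P1_P2)
  from assms obtain x where U: "U = GM x 0 0 0" by (auto simp: corner_P1_P1)
  obtain p where "phi (GM x 0 0 0) = GM p (actAM R x m) (actNA R n x) 0"
    by (rule phi_corner_P1_P1[OF p2])
  then have "varphi U = GM (p - a * x) 0 0 0"
    by (simp add: varphi_eq[OF p1 p2] U lie_def)
  then show ?thesis by (simp add: corner_P1_P1)
qed

lemma varphi_corner_P2_P2: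
  assumes "U \<in> corner R gP2 gP2"
  shows "varphi U \<in> corner R gP2 gP2"
proof -
  obtain a m n b where p1: "phi gP1 = GM a m n 0" and p2: "phi gP2 = GM 0 (- m) (- n) b"
    by (rule phi_P1_P2)
  from assms obtain y where U: "U = GM 0 0 0 y" by (auto simp: corner_P2_P2)
  obtain p where "phi (GM 0 0 0 y) = GM 0 (- actMB R m y) (- actBN R y n) p"
    by (rule phi_corner_P2_P2[OF p1])
  then have "varphi U = GM 0 0 0 (p - b * y)"
    by (simp add: varphi_eq[OF p1 p2] U lie_def)
  then show ?thesis by (simp add: corner_P2_P2)
qed

lemma varphi_corner_P1_P2:
  assumes "U \<in> corner R gP1 gP2"
  shows "gmul R (gmul R gP1 (varphi U)) gP1 = 0 \<and> gmul R (gmul R gP2 (varphi U)) gP2 = 0"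
proof -
  obtain a m n b where p1: "phi gP1 = GM a m n 0" and p2: "phi gP2 = GM 0 (- m) (- n) b"
    by (rule phi_P1_P2)
  from assms obtain u where U: "U = GM 0 u 0 0" by (auto simp: corner_P1_P2)
  obtain q r where "phi (GM 0 u 0 0) = GM (- pairMN R u n) q r (pairNM R n u)"
    by (rule phi_corner_P1_P2[OF p1 p2])
  then show ?thesis
    by (simp add: compress_P1_P1 compress_P2_P2 varphi_eq[OF p1 p2] U lie_def)
qed

lemma varphi_corner_P2_P1:
  assumes "U \<in> corner R gP2 gP1"
  shows "gmul R (gmul R gP1 (varphi U)) gP1 = 0 \<and> gmul R (gmul R gP2 (varphi U)) gP2 = 0"
proof -
  obtain a m n b where p1: "phi gP1 = GM a m n 0" and p2: "phi gP2 = GM 0 (- m) (- n) b"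
    by (rule phi_P1_P2)
  from assms obtain v where U: "U = GM 0 0 v 0" by (auto simp: corner_P2_P1)
  obtain q r where "phi (GM 0 0 v 0) = GM (- pairMN R m v) q r (pairNM R v m)"
    by (rule phi_corner_P2_P1[OF p1 p2])
  then show ?thesis
    by (simp add: compress_P1_P1 compress_P2_P2 varphi_eq[OF p1 p2] U lie_def)
qed

end

theorem lemma2p5:
  fixes R :: "('a::ring_1,'m::ab_group_add,'n::ab_group_add,'b::ring_1) gmops"
    and phi :: "('a,'m,'n,'b) gm \<Rightarrow> ('a,'m,'n,'b) gm"
  assumes "gen_matrix_ring R"
    and "\<forall>X Y. phi (X + Y) = phi X + phi Y"
    and "\<forall>U V. gmul R U V = 0 \<and> gmul R V U = 0 \<longrightarrow> jordan R (phi U) V + jordan R U (phi V) = 0"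
  defines "vphi \<equiv> (\<lambda>U. phi U - gmul R (phi gI) U
      + lie R (gmul R (gmul R gP1 (phi gP1)) gP2 + gmul R (gmul R gP2 (phi gP2)) gP1) U)"
  shows "(\<forall>U \<in> corner R gP1 gP1. vphi U \<in> corner R gP1 gP1)
       \<and> (\<forall>U \<in> corner R gP2 gP2. vphi U \<in> corner R gP2 gP2)
       \<and> (\<forall>U \<in> corner R gP1 gP2. gmul R (gmul R gP1 (vphi U)) gP1 = 0 \<and> gmul R (gmul R gP2 (vphi U)) gP2 = 0)
       \<and> (\<forall>U \<in> corner R gP2 gP1. gmul R (gmul R gP1 (vphi U)) gP1 = 0 \<and> gmul R (gmul R gP2 (vphi U)) gP2 = 0)"
proof -
  interpret jordan_zero_product_map R phi
    using assms(1-3) by unfold_locales blast+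
  have "vphi = varphi"
    by (simp add: fun_eq_iff vphi_def varphi_def T_def)
  then show ?thesis
    using varphi_corner_P1_P1 varphi_corner_P2_P2 varphi_corner_P1_P2 varphi_corner_P2_P1 by simp
qed

end
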